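(* Let $P:\mathcal{X}\times\mathcal{E}\to\mathcal{Y}\times\mathcal{E}$ be an $\varepsilon$-DP RAM program for computing the mean $\frac{1}{|x|}\sum_i x_i$ of datasets $x\in\{0,1\}^*$, such that the runtime distributions satisfy $T_P(x,\mathit{env})\equiv T_P(x',\mathit{env}')$ (identically distributed) for all $x,x'\in\{0,1\}^*$ and all input-compatible $\mathit{env},\mathit{env}'\in\mathcal{E}$. Then for every $0<\beta<1$ there exist a dataset $x$ and a constant $\alpha$ such that $$\Pr\left[\Big|\mathrm{out}(P(x,\mathit{env}))-\frac{1}{|x|}\sum_i x_i\Big|>\alpha\right]>\beta .$$
   Context: Datasets are finite bit strings $x\in\{0,1\}^*$ (records are bits). A program runs on $x$ in an execution environment $\mathit{env}\in\mathcal{E}$ (initial machine state) compatible with $x$; $\mathrm{out}(P(x,\mathit{env}))$ denotes the random output and $T_P(x,\mathit{env})$ the random runtime (number of RAM instructions executed). $\varepsilon$-DP means the output distribution satisfies $\varepsilon$-differential privacy with respect to datasets at insert-delete distance at most $1$. RAM model: memory cells with arbitrary naturals, unit-cost arithmetic, Boolean ops, memory access, conditional jumps, $\texttt{RAND}(n)$ uniform on $\{0,\dots,n\}$. *)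

theory Defs
  imports "HOL-Probability.Probability"
begin

text \<open>Arguments are memory addresses (except constants and jump targets).\<close>

datatype instr =
    Const nat nat
  | Add nat nat nat
  | Sub nat nat nat
  | Mul nat nat nat
  | Div nat nat nat
  | Mod nat nat nat
  | BAnd nat nat nat
  | BOr nat nat nat
  | BXor nat nat nat
  | Eq nat nat nat
  | Lt nat nat nat
  | Load nat nat
  | Store nat nat
  | Jz nat nat
  | Jmp nat
  | Rand nat nat
  | Halt

type_synonym prog = "instr list"

type_synonym conf = "nat \<times> (nat \<Rightarrow> nat)"

definition halted :: "prog \<Rightarrow> conf \<Rightarrow> bool" where
  "halted P c \<longleftrightarrow> fst c \<ge> length P \<or> P ! fst c = Halt"

fun exec :: "instr \<Rightarrow> conf \<Rightarrow> conf pmf" where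
  "exec (Const i n) (pc, M) = return_pmf (Suc pc, M(i := n))"
| "exec (Add i j k) (pc, M) = return_pmf (Suc pc, M(i := M j + M k))"
| "exec (Sub i j k) (pc, M) = return_pmf (Suc pc, M(i := M j - M k))"
| "exec (Mul i j k) (pc, M) = return_pmf (Suc pc, M(i := M j * M k))"
| "exec (Div i j k) (pc, M) = return_pmf (Suc pc, M(i := M j div M k))"
| "exec (Mod i j k) (pc, M) = return_pmf (Suc pc, M(i := M j mod M k))"
| "exec (BAnd i j k) (pc, M) = return_pmf (Suc pc, M(i := Bit_Operations.and (M j) (M k)))"
| "exec (BOr i j k) (pc, M) = return_pmf (Suc pc, M(i := Bit_Operations.or (M j) (M k)))"
| "exec (BXor i j k) (pc, M) = return_pmf (Suc pc, M(i := Bit_Operations.xor (M j) (M k)))"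
| "exec (Eq i j k) (pc, M) = return_pmf (Suc pc, M(i := of_bool (M j = M k)))"
| "exec (Lt i j k) (pc, M) = return_pmf (Suc pc, M(i := of_bool (M j < M k)))"
| "exec (Load i j) (pc, M) = return_pmf (Suc pc, M(i := M (M j)))"
| "exec (Store i j) (pc, M) = return_pmf (Suc pc, M(M i := M j))"
| "exec (Jz i l) (pc, M) = return_pmf (if M i = 0 then l else Suc pc, M)"
| "exec (Jmp l) (pc, M) = return_pmf (l, M)"
| "exec (Rand i j) (pc, M) = map_pmf (\<lambda>r. (Suc pc, M(i := r))) (pmf_of_set {0..M j})"
| "exec Halt (pc, M) = return_pmf (pc, M)"

text \<open>One step of execution, together with a counter of executed instructions.
  Halted configurations are absorbing and do not increase the counter.\<close>
definition step :: "prog \<Rightarrow> conf \<times> nat \<Rightarrow> (conf \<times> nat) pmf" where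
  "step P s = (if halted P (fst s) then return_pmf s
               else map_pmf (\<lambda>c. (c, Suc (snd s))) (exec (P ! fst (fst s)) (fst s)))"

primrec run :: "prog \<Rightarrow> nat \<Rightarrow> conf \<times> nat \<Rightarrow> (conf \<times> nat) pmf" where
  "run P 0 s = return_pmf s"
| "run P (Suc k) s = bind_pmf (run P k s) (step P)"

text \<open>An execution environment is the initial memory; execution starts at pc 0
  with instruction counter 0.\<close>
definition init :: "(nat \<Rightarrow> nat) \<Rightarrow> conf \<times> nat" where
  "init env = ((0, env), 0)"

definition time_prob :: "prog \<Rightarrow> (nat \<Rightarrow> nat) \<Rightarrow> nat \<Rightarrow> real" where
  "time_prob P env t = measure_pmf.prob (run P t (init env)) {s. halted P (fst s) \<and> snd s = t}"

definition terminates :: "prog \<Rightarrow> (nat \<Rightarrow> nat) \<Rightarrow> bool" where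
  "terminates P env \<longleftrightarrow> (\<Sum>t. time_prob P env t) = 1"

text \<open>Output convention: the ram_output is the rational number M[0] / M[1] read off the final memory.\<close>
definition ram_output :: "(nat \<Rightarrow> nat) \<Rightarrow> real" where
  "ram_output M = real (M 0) / real (M 1)"

definition out_prob :: "prog \<Rightarrow> (nat \<Rightarrow> nat) \<Rightarrow> real set \<Rightarrow> real" where
  "out_prob P env A = (\<Sum>t. measure_pmf.prob (run P t (init env))
       {s. halted P (fst s) \<and> snd s = t \<and> ram_output (snd (fst s)) \<in> A})"

type_synonym dataset = "bool list"

text \<open>Input convention: M[2] holds |x|, and M[3+i] holds the bit x_i; all other cells
  are arbitrary (part of the environment).\<close>
definition compatible :: "dataset \<Rightarrow> (nat \<Rightarrow> nat) \<Rightarrow> bool" where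
  "compatible x env \<longleftrightarrow> env 2 = length x \<and> (\<forall>i < length x. env (3 + i) = of_bool (x ! i))"

definition mean :: "dataset \<Rightarrow> real" where
  "mean x = (\<Sum>i<length x. of_bool (x ! i)) / real (length x)"

text \<open>Insert-delete distance at most 1.\<close>
definition neighbors :: "dataset \<Rightarrow> dataset \<Rightarrow> bool" where
  "neighbors x y \<longleftrightarrow> x = y
     \<or> (\<exists>i < length x. y = take i x @ drop (Suc i) x)
     \<or> (\<exists>i < length y. x = take i y @ drop (Suc i) y)"

definition eps_DP :: "real \<Rightarrow> prog \<Rightarrow> bool" where
  "eps_DP \<epsilon> P \<longleftrightarrow> (\<forall>x x' env env' A. neighbors x x' \<longrightarrow> compatible x env \<longrightarrow> compatible x' env' \<longrightarrow>
       out_prob P env A \<le> exp \<epsilon> * out_prob P env' A)"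

end

theory Submission
  imports Defs
begin

text \<open>
  Since the running time does not depend on the input, there is one \<open>T\<close> by which the program
  halts with probability close to 1 on every input.  Within \<open>T\<close> steps it loads at most \<open>T\<close>
  cells indirectly, and the finitely many cells named in its code are the only ones it accesses
  directly.  Hence, among the \<open>n \<gg> T\<close> input cells of the all-zero dataset of length \<open>n\<close>,
  there are \<open>k\<close> cells \<open>U\<close> that are loaded with small total probability.  Setting any \<open>j \<le> k\<close>
  of them to one changes the mean to \<open>j/n\<close> but changes the output distribution only slightly,
  since the two runs can be coupled until a cell of \<open>U\<close> is loaded.  If the program were
  accurate up to \<open>1/(3n)\<close> with probability \<open>1 - \<beta>\<close> on every dataset, then \<open>\<epsilon>\<close>-DP would
  make each of the \<open>k + 1\<close> disjoint events "output near \<open>j/n\<close>" likely on the all-zero input,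
  which is impossible for \<open>k > 2 e\<^sup>\<epsilon> / (1 - \<beta>)\<close>.
\<close>

section \<open>Halting probabilities\<close>

lemma run_counter:
  assumes "s \<in> set_pmf (run P m (c, 0))"
  shows "snd s \<le> m \<and> (\<not> halted P (fst s) \<longrightarrow> snd s = m)"
  using assms
proof (induction m arbitrary: s)
  case 0
  then show ?case by simp
next
  case (Suc m)
  then obtain s0 where s0: "s0 \<in> set_pmf (run P m (c, 0))" "s \<in> set_pmf (step P s0)"
    by auto
  then show ?case
    using Suc.IH[OF s0(1)] by (cases "halted P (fst s0)") (auto simp: step_def)
qed

lemma run_halted_at_stable:
  assumes "t \<le> m" and F: "\<forall>s\<in>F. halted P (fst s) \<and> snd s = t"
  shows "measure_pmf.prob (run P m (c, 0)) F = measure_pmf.prob (run P t (c, 0)) F"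
  using assms(1)
proof (induction m rule: dec_induct)
  case base
  then show ?case by simp
next
  case (step m)
  have "emeasure (run P (Suc m) (c, 0)) F
      = (\<integral>\<^sup>+s. emeasure (step P s) F \<partial>run P m (c, 0))"
    by simp
  also have "\<dots> = (\<integral>\<^sup>+s. indicator F s \<partial>run P m (c, 0))"
  proof (rule nn_integral_cong_AE, unfold AE_measure_pmf_iff, intro ballI)
    fix s assume s: "s \<in> set_pmf (run P m (c, 0))"
    show "emeasure (step P s) F = indicator F s"
    proof (cases "halted P (fst s)")
      case True
      then show ?thesis by (simp add: step_def)
    next
      case False
      then have "F \<inter> set_pmf (step P s) = {}" and "s \<notin> F"
        using run_counter[OF s] step.hyps F by (auto simp: step_def)
      then show ?thesis
        by (metis emeasure_Int_set_pmf emeasure_empty indicator_simps(2) inf_commute)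
    qed
  qed
  also have "\<dots> = emeasure (run P m (c, 0)) F"
    by simp
  finally show ?case
    using step.IH by (simp add: measure_pmf.emeasure_eq_measure)
qed

definition halt_at_prob :: "prog \<Rightarrow> (nat \<Rightarrow> nat) \<Rightarrow> real set \<Rightarrow> nat \<Rightarrow> real" where
  "halt_at_prob P env A t = measure_pmf.prob (run P t (init env))
     {s. halted P (fst s) \<and> snd s = t \<and> ram_output (snd (fst s)) \<in> A}"

definition halt_by_prob :: "prog \<Rightarrow> (nat \<Rightarrow> nat) \<Rightarrow> nat \<Rightarrow> real set \<Rightarrow> real" where
  "halt_by_prob P env T A = measure_pmf.prob (run P T (init env))
     {s. halted P (fst s) \<and> ram_output (snd (fst s)) \<in> A}"

lemma time_prob_eq_halt_at_prob: "time_prob P env t = halt_at_prob P env UNIV t"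
  by (simp add: time_prob_def halt_at_prob_def)

lemma out_prob_eq_suminf: "out_prob P env A = (\<Sum>t. halt_at_prob P env A t)"
  by (simp add: out_prob_def halt_at_prob_def)

lemma sum_halt_at_prob: "(\<Sum>t\<le>T. halt_at_prob P env A t) = halt_by_prob P env T A"
proof -
  let ?E = "\<lambda>t. {s. halted P (fst s) \<and> snd s = t \<and> ram_output (snd (fst s)) \<in> A}"
  have "(\<Sum>t\<le>T. halt_at_prob P env A t) = (\<Sum>t\<le>T. measure_pmf.prob (run P T (init env)) (?E t))"
    unfolding halt_at_prob_def init_def by (intro sum.cong refl run_halted_at_stable[symmetric]) auto
  also have "\<dots> = measure_pmf.prob (run P T (init env)) (\<Union>t\<le>T. ?E t)"
    by (rule measure_pmf.finite_measure_finite_Union[symmetric])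
      (auto simp: disjoint_family_on_def)
  also have "\<dots> = halt_by_prob P env T A"
    unfolding halt_by_prob_def
    by (rule measure_pmf.finite_measure_eq_AE)
      (auto simp: AE_measure_pmf_iff init_def dest: run_counter)
  finally show ?thesis .
qed

lemma halt_by_prob_UNIV: "halt_by_prob P env T UNIV = (\<Sum>t\<le>T. time_prob P env t)"
  by (simp add: sum_halt_at_prob time_prob_eq_halt_at_prob)

lemma summable_halt_at_prob: "summable (halt_at_prob P env A)"
proof (rule summableI_nonneg_bounded)
  fix n
  have "sum (halt_at_prob P env A) {..<n} \<le> sum (halt_at_prob P env A) {..n}"
    by (intro sum_mono2) (auto simp: halt_at_prob_def)
  also have "\<dots> \<le> 1"
    by (simp add: sum_halt_at_prob halt_by_prob_def)
  finally show "sum (halt_at_prob P env A) {..<n} \<le> 1" .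
qed (simp add: halt_at_prob_def)

lemma halt_at_prob_add_compl:
  "halt_at_prob P env A t + halt_at_prob P env (- A) t = halt_at_prob P env UNIV t"
  unfolding halt_at_prob_def
  by (subst measure_pmf.finite_measure_Union[symmetric]) (auto intro!: arg_cong[where f = "measure _"])

lemma halt_by_prob_add_compl:
  "halt_by_prob P env T A + halt_by_prob P env T (- A) = halt_by_prob P env T UNIV"
  unfolding halt_by_prob_def
  by (subst measure_pmf.finite_measure_Union[symmetric]) (auto intro!: arg_cong[where f = "measure _"])

lemma halt_by_prob_le_out_prob: "halt_by_prob P env T A \<le> out_prob P env A"
  unfolding out_prob_eq_suminf sum_halt_at_prob[symmetric] lessThan_Suc_atMost[symmetric]
  by (rule sum_le_suminf) (auto intro: summable_halt_at_prob simp: halt_at_prob_def)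

lemma out_prob_add_compl:
  assumes "terminates P env"
  shows "out_prob P env A + out_prob P env (- A) = 1"
  using assms
  by (simp add: out_prob_eq_suminf terminates_def time_prob_eq_halt_at_prob halt_at_prob_add_compl
      suminf_add[OF summable_halt_at_prob summable_halt_at_prob])

lemma out_prob_le_halt_by_prob:
  assumes "terminates P env"
  shows "out_prob P env A \<le> 1 - halt_by_prob P env T UNIV + halt_by_prob P env T A"
  using out_prob_add_compl[OF assms, of A] halt_by_prob_add_compl[of P env T A]
    halt_by_prob_le_out_prob[of P env T "- A"]
  by linarith

lemma terminates_halt_by_prob:
  assumes "terminates P env" and "0 < \<delta>"
  obtains T where "1 - \<delta> \<le> halt_by_prob P env T UNIV"
proof -
  have "time_prob P env sums 1"
    using assms(1) summable_halt_at_prob unfolding terminates_def time_prob_eq_halt_at_prob[abs_def]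
    by (metis summable_sums)
  then have "eventually (\<lambda>n. 1 - \<delta> < (\<Sum>t<n. time_prob P env t)) sequentially"
    using assms(2) unfolding sums_def by (intro order_tendstoD(1)) auto
  then obtain T where "1 - \<delta> < (\<Sum>t<T. time_prob P env t)"
    by (auto simp: eventually_sequentially)
  also have "\<dots> \<le> (\<Sum>t\<le>T. time_prob P env t)"
    by (intro sum_mono2) (auto simp: time_prob_def)
  also have "\<dots> = halt_by_prob P env T UNIV"
    by (simp add: halt_by_prob_UNIV)
  finally show ?thesis
    by (rule that[OF less_imp_le])
qed

section \<open>Runs that record their indirect reads\<close>

text \<open>Apart from its operands, an instruction reads only the cell loaded by \<open>Load\<close>:
  \<open>Store\<close> writes to an indirect address but reads only operand cells.\<close>

fun indirect_reads :: "instr \<Rightarrow> (nat \<Rightarrow> nat) \<Rightarrow> nat set" where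
  "indirect_reads (Load i j) M = {M j}"
| "indirect_reads _ M = {}"

fun operand_addrs :: "instr \<Rightarrow> nat set" where
  "operand_addrs (Const i n) = {i}"
| "operand_addrs (Add i j k) = {i, j, k}"
| "operand_addrs (Sub i j k) = {i, j, k}"
| "operand_addrs (Mul i j k) = {i, j, k}"
| "operand_addrs (Div i j k) = {i, j, k}"
| "operand_addrs (Mod i j k) = {i, j, k}"
| "operand_addrs (BAnd i j k) = {i, j, k}"
| "operand_addrs (BOr i j k) = {i, j, k}"
| "operand_addrs (BXor i j k) = {i, j, k}"
| "operand_addrs (Eq i j k) = {i, j, k}"
| "operand_addrs (Lt i j k) = {i, j, k}"
| "operand_addrs (Load i j) = {i, j}"
| "operand_addrs (Store i j) = {i, j}"
| "operand_addrs (Jz i l) = {i}"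
| "operand_addrs (Jmp l) = {}"
| "operand_addrs (Rand i j) = {i, j}"
| "operand_addrs Halt = {}"

definition direct_addrs :: "prog \<Rightarrow> nat set" where
  "direct_addrs P = (\<Union>\<iota>\<in>set P. operand_addrs \<iota>)"

lemma finite_direct_addrs: "finite (direct_addrs P)"
proof -
  have "finite (operand_addrs \<iota>)" for \<iota>
    by (cases \<iota>) auto
  then show ?thesis
    by (simp add: direct_addrs_def)
qed

type_synonym tracked = "(conf \<times> nat) \<times> nat set"

definition tracked_step :: "prog \<Rightarrow> tracked \<Rightarrow> tracked pmf" where
  "tracked_step P a = map_pmf (\<lambda>s'. (s', if halted P (fst (fst a)) then snd a
       else snd a \<union> indirect_reads (P ! fst (fst (fst a))) (snd (fst (fst a))))) (step P (fst a))"

primrec tracked_run :: "prog \<Rightarrow> nat \<Rightarrow> tracked \<Rightarrow> tracked pmf" where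
  "tracked_run P 0 a = return_pmf a"
| "tracked_run P (Suc k) a = bind_pmf (tracked_run P k a) (tracked_step P)"

lemma map_fst_tracked_run: "map_pmf fst (tracked_run P m a) = run P m (fst a)"
proof (induction m)
  case 0
  then show ?case by simp
next
  case (Suc m)
  have "map_pmf fst (tracked_run P (Suc m) a) = bind_pmf (tracked_run P m a) (\<lambda>x. step P (fst x))"
    by (simp add: map_bind_pmf tracked_step_def pmf.map_comp o_def)
  also have "\<dots> = run P (Suc m) (fst a)"
    by (simp add: bind_map_pmf[symmetric] Suc)
  finally show ?case .
qed

lemma halt_by_prob_tracked:
  "halt_by_prob P env T A = measure_pmf.prob (tracked_run P T (init env, {}))
     {a. halted P (fst (fst a)) \<and> ram_output (snd (fst (fst a))) \<in> A}"
proof -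
  have "halt_by_prob P env T A = measure_pmf.prob (map_pmf fst (tracked_run P T (init env, {})))
      {s. halted P (fst s) \<and> ram_output (snd (fst s)) \<in> A}"
    by (simp add: halt_by_prob_def map_fst_tracked_run)
  then show ?thesis
    by (simp add: vimage_def)
qed

lemma tracked_run_card_reads:
  assumes "a \<in> set_pmf (tracked_run P m (s0, {}))" and "snd s0 = 0"
  shows "finite (snd a) \<and> card (snd a) \<le> m"
proof -
  have "finite (snd a) \<and> card (snd a) \<le> snd (fst a) \<and> snd (fst a) \<le> m"
    using assms(1)
  proof (induction m arbitrary: a)
    case 0
    then show ?case using assms(2) by simp
  next
    case (Suc m)
    then obtain a0 where a0: "a0 \<in> set_pmf (tracked_run P m (s0, {}))" "a \<in> set_pmf (tracked_step P a0)"
      by auto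
    define R where "R = indirect_reads (P ! fst (fst (fst a0))) (snd (fst (fst a0)))"
    have "finite R" "card R \<le> 1"
      unfolding R_def by (cases "P ! fst (fst (fst a0))"; simp)+
    moreover have "card (snd a0 \<union> R) \<le> card (snd a0) + card R"
      by (rule card_Un_le)
    ultimately show ?case
      using Suc.IH[OF a0(1)] a0(2)
      by (cases "halted P (fst (fst a0))") (auto simp: tracked_step_def step_def R_def[symmetric])
  qed
  then show ?thesis by simp
qed

definition coupled :: "nat set \<Rightarrow> tracked \<Rightarrow> tracked \<Rightarrow> bool" where
  "coupled U a a' \<longleftrightarrow> (snd a \<inter> U \<noteq> {} \<and> snd a' \<inter> U \<noteq> {}) \<or>
     (snd a \<inter> U = {} \<and> snd a = snd a' \<and> snd (fst a) = snd (fst a') \<and>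
      fst (fst (fst a)) = fst (fst (fst a')) \<and>
      (\<forall>c. c \<notin> U \<longrightarrow> snd (fst (fst a)) c = snd (fst (fst a')) c))"

lemma exec_coupled:
  assumes "operand_addrs \<iota> \<inter> U = {}" and "\<forall>c. c \<notin> U \<longrightarrow> M c = M' c" and "R \<inter> U = {}"
  shows "rel_pmf (coupled U)
     (map_pmf (\<lambda>c. ((c, k), R \<union> indirect_reads \<iota> M)) (exec \<iota> (pc, M)))
     (map_pmf (\<lambda>c. ((c, k), R \<union> indirect_reads \<iota> M')) (exec \<iota> (pc, M')))"
proof (cases \<iota>)
  case (Rand i j)
  then have "M j = M' j"
    using assms by auto
  then show ?thesis
    using assms Rand by (auto simp: pmf.rel_map coupled_def intro!: rel_pmf_reflI)
qed (use assms in \<open>auto simp: coupled_def\<close>)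

lemma tracked_step_coupled:
  assumes "coupled U a a'" and "U \<inter> direct_addrs P = {}"
  shows "rel_pmf (coupled U) (tracked_step P a) (tracked_step P a')"
proof (cases "snd a \<inter> U = {}")
  case False
  then have "snd a' \<inter> U \<noteq> {}"
    using assms(1) by (auto simp: coupled_def)
  have reads_mono: "snd b \<subseteq> snd b'" if "b' \<in> set_pmf (tracked_step P b)" for b b'
    using that by (auto simp: tracked_step_def)
  show ?thesis
  proof (rule pmf.rel_mono_strong[OF rel_pmf_top[THEN fun_cong, THEN fun_cong, THEN iffD2]])
    fix b b' assume "b \<in> set_pmf (tracked_step P a)" "b' \<in> set_pmf (tracked_step P a')"
    then have "snd a \<subseteq> snd b" "snd a' \<subseteq> snd b'"
      by (auto dest: reads_mono)
    then show "coupled U b b'"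
      using False \<open>snd a' \<inter> U \<noteq> {}\<close> unfolding coupled_def by blast
  qed simp
next
  case True
  obtain pc M k R where a: "a = (((pc, M), k), R)"
    by (metis prod.collapse)
  obtain pc' M' k' R' where a': "a' = (((pc', M'), k'), R')"
    by (metis prod.collapse)
  have eq: "pc' = pc" "k' = k" "R' = R" "R \<inter> U = {}" "\<forall>c. c \<notin> U \<longrightarrow> M c = M' c"
    using assms(1) True unfolding a a' coupled_def by auto
  show ?thesis
  proof (cases "halted P (pc, M)")
    case True
    then show ?thesis
      using eq unfolding a a' by (simp add: halted_def tracked_step_def step_def coupled_def)
  next
    case False
    then have "P ! pc \<in> set P" and halted': "\<not> halted P (pc, M')"
      by (simp_all add: halted_def)
    then have "operand_addrs (P ! pc) \<inter> U = {}"
      using assms(2) by (auto simp: direct_addrs_def)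
    from exec_coupled[OF this eq(5) eq(4), of "Suc k" pc]
    show ?thesis
      using False halted' eq unfolding a a'
      by (simp add: tracked_step_def step_def pmf.map_comp o_def)
  qed
qed

lemma tracked_run_coupled:
  assumes "coupled U a a'" and "U \<inter> direct_addrs P = {}"
  shows "rel_pmf (coupled U) (tracked_run P m a) (tracked_run P m a')"
proof (induction m)
  case 0
  then show ?case using assms(1) by simp
next
  case (Suc m)
  then show ?case
    by (simp, intro rel_pmf_bindI[OF Suc] tracked_step_coupled assms(2))
qed

definition reads_prob :: "prog \<Rightarrow> (nat \<Rightarrow> nat) \<Rightarrow> nat \<Rightarrow> nat set \<Rightarrow> real" where
  "reads_prob P env T U = measure_pmf.prob (tracked_run P T (init env, {})) {a. snd a \<inter> U \<noteq> {}}"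

lemma halt_by_prob_perturb:
  assumes agree: "\<forall>c. c \<notin> U \<longrightarrow> env c = env' c"
    and U: "U \<inter> direct_addrs P = {}" "0 \<notin> U" "1 \<notin> U"
  shows "halt_by_prob P env' T A \<le> halt_by_prob P env T A + reads_prob P env T U"
proof -
  let ?p = "tracked_run P T (init env, {})"
  define F where "F = {a :: tracked. halted P (fst (fst a)) \<and> ram_output (snd (fst (fst a))) \<in> A}"
  define G where "G = {a :: tracked. snd a \<inter> U \<noteq> {}}"
  have "coupled U (init env', {}) (init env, {})"
    using agree by (auto simp: coupled_def init_def)
  then have coupling: "rel_pmf (coupled U) (tracked_run P T (init env', {})) ?p"
    by (rule tracked_run_coupled[OF _ U(1)])
  have covered: "{b. \<exists>a\<in>F. coupled U a b} \<subseteq> F \<union> G"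
  proof
    fix b assume "b \<in> {b. \<exists>a\<in>F. coupled U a b}"
    then obtain a where a: "a \<in> F" "coupled U a b"
      by auto
    show "b \<in> F \<union> G"
    proof (cases "snd b \<inter> U = {}")
      case True
      then have "fst (fst (fst a)) = fst (fst (fst b))"
        and agree_b: "\<forall>c. c \<notin> U \<longrightarrow> snd (fst (fst a)) c = snd (fst (fst b)) c"
        using a(2) unfolding coupled_def by auto
      moreover have "ram_output (snd (fst (fst a))) = ram_output (snd (fst (fst b)))"
        using agree_b U(2,3) by (simp add: ram_output_def)
      ultimately have "b \<in> F"
        using a(1) by (simp add: F_def halted_def)
      then show ?thesis ..
    qed (simp add: G_def)
  qed
  have "halt_by_prob P env' T A = measure_pmf.prob (tracked_run P T (init env', {})) F"
    by (simp add: halt_by_prob_tracked F_def)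
  also have "\<dots> \<le> measure_pmf.prob ?p {b. \<exists>a\<in>F. coupled U a b}"
    by (rule rel_pmf_measureD[OF coupling])
  also have "\<dots> \<le> measure_pmf.prob ?p (F \<union> G)"
    using covered by (intro measure_pmf.finite_measure_mono) auto
  also have "\<dots> \<le> measure_pmf.prob ?p F + measure_pmf.prob ?p G"
    by (rule measure_Un_le) auto
  also have "\<dots> = halt_by_prob P env T A + reads_prob P env T U"
    by (simp add: halt_by_prob_tracked reads_prob_def F_def G_def)
  finally show ?thesis .
qed

lemma reads_prob_le_sum:
  assumes "finite U"
  shows "reads_prob P env T U \<le> (\<Sum>c\<in>U. reads_prob P env T {c})"
proof -
  have "{a :: tracked. snd a \<inter> U \<noteq> {}} = (\<Union>c\<in>U. {a. snd a \<inter> {c} \<noteq> {}})"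
    by auto
  then show ?thesis
    unfolding reads_prob_def by (simp add: measure_pmf.finite_measure_subadditive_finite[OF assms])
qed

lemma sum_reads_prob_le:
  assumes "finite C"
  shows "(\<Sum>c\<in>C. reads_prob P env T {c}) \<le> real T"
proof -
  let ?p = "tracked_run P T (init env, {})"
  let ?read = "\<lambda>c a. indicator {a :: tracked. c \<in> snd a} a :: real"
  have integrable: "integrable ?p (?read c)" for c
    by (rule measure_pmf.integrable_const_bound[where B = 1]) auto
  have "reads_prob P env T {c} = measure_pmf.expectation ?p (?read c)" for c
    by (simp add: reads_prob_def)
  then have "(\<Sum>c\<in>C. reads_prob P env T {c}) = measure_pmf.expectation ?p (\<lambda>a. \<Sum>c\<in>C. ?read c a)"
    by (simp add: Bochner_Integration.integral_sum[OF integrable])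
  also have "\<dots> \<le> real T"
  proof (rule measure_pmf.integral_le_const)
    show "integrable ?p (\<lambda>a. \<Sum>c\<in>C. ?read c a)"
      by (simp add: integrable)
    show "AE a in ?p. (\<Sum>c\<in>C. ?read c a) \<le> real T"
      unfolding AE_measure_pmf_iff
    proof
      fix a assume "a \<in> set_pmf ?p"
      then have reads: "finite (snd a)" "card (snd a) \<le> T"
        using tracked_run_card_reads[of a P T "init env"] by (simp_all add: init_def)
      have "(\<Sum>c\<in>C. ?read c a) = real (card (C \<inter> snd a))"
        using assms by (simp add: indicator_def sum.If_cases Int_def)
      also have "\<dots> \<le> real T"
        using reads card_mono[OF reads(1), of "C \<inter> snd a"] by simp
      finally show "(\<Sum>c\<in>C. ?read c a) \<le> real T" .
    qed
  qed
  finally show ?thesis .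
qed

text \<open>Markov's inequality in counting form: at most \<open>T k / \<eta>\<close> cells are read with
  probability above \<open>\<eta> / k\<close>.\<close>

lemma exists_rarely_read_cells:
  assumes "finite C" and "0 < \<eta>" and "0 < k"
    and card_C: "real T * real k / \<eta> + real k \<le> real (card C)"
  obtains U where "U \<subseteq> C" "card U = k" "reads_prob P env T U \<le> \<eta>"
proof -
  define G where "G = {c\<in>C. reads_prob P env T {c} \<le> \<eta> / real k}"
  have "real (card (C - G)) * (\<eta> / real k) \<le> (\<Sum>c\<in>C - G. reads_prob P env T {c})"
    by (rule sum_bounded_below) (auto simp: G_def)
  also have "\<dots> \<le> (\<Sum>c\<in>C. reads_prob P env T {c})"
    by (rule sum_mono2[OF assms(1)]) (auto simp: reads_prob_def)
  also have "\<dots> \<le> real T"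
    by (rule sum_reads_prob_le[OF assms(1)])
  finally have "real (card (C - G)) \<le> real T * real k / \<eta>"
    using assms(2,3) by (simp add: field_simps)
  moreover have "card C = card (C - G) + card G"
    using assms(1) card_Diff_subset[of G C] card_mono[of C G] by (force simp: G_def)
  ultimately have "k \<le> card G"
    using card_C by linarith
  then obtain U where U: "U \<subseteq> G" "card U = k"
    by (meson obtain_subset_with_card_n)
  then have "finite U"
    using assms(3) card_ge_0_finite by blast
  have "reads_prob P env T U \<le> (\<Sum>c\<in>U. reads_prob P env T {c})"
    by (rule reads_prob_le_sum) fact
  also have "\<dots> \<le> real (card U) * (\<eta> / real k)"
    by (rule sum_bounded_above) (use U in \<open>auto simp: G_def\<close>)
  also have "\<dots> = \<eta>"
    using U(2) assms(3) by simp
  finally show ?thesis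
    using that U by (auto simp: G_def)
qed

section \<open>Datasets written into chosen input cells\<close>

definition cells_dataset :: "nat \<Rightarrow> nat set \<Rightarrow> dataset" where
  "cells_dataset n V = map (\<lambda>i. 3 + i \<in> V) [0..<n]"

definition cells_env :: "nat \<Rightarrow> nat set \<Rightarrow> nat \<Rightarrow> nat" where
  "cells_env n V = (\<lambda>c. of_bool (c \<in> V))(2 := n)"

lemma compatible_cells_env:
  assumes "V \<subseteq> {3..<n + 3}"
  shows "compatible (cells_dataset n V) (cells_env n V)"
  using assms by (auto simp: compatible_def cells_dataset_def cells_env_def)

lemma mean_cells_dataset:
  assumes "V \<subseteq> {3..<n + 3}"
  shows "mean (cells_dataset n V) = real (card V) / real n"
proof -
  let ?I = "{..<n} \<inter> {i. 3 + i \<in> V}"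
  have "(\<lambda>i. 3 + i) ` ?I = V"
  proof (intro equalityI subsetI)
    fix c assume "c \<in> V"
    moreover have "c \<in> {3..<n + 3}"
      using assms \<open>c \<in> V\<close> by blast
    ultimately have "c = 3 + (c - 3)" "c - 3 \<in> ?I"
      by auto
    then show "c \<in> (\<lambda>i. 3 + i) ` ?I"
      by blast
  qed auto
  then have "card ?I = card V"
    using card_image[OF inj_on_add[of 3 ?I]] by simp
  moreover have "(\<Sum>i<n. of_bool (cells_dataset n V ! i) :: real) = (\<Sum>i<n. of_bool (3 + i \<in> V))"
    by (intro sum.cong) (auto simp: cells_dataset_def)
  ultimately show ?thesis
    unfolding mean_def by (simp add: cells_dataset_def)
qed

lemma disjoint_family_near_multiples:
  assumes "0 < n"
  shows "disjoint_family (\<lambda>j :: nat. {y :: real. \<bar>y - real j / real n\<bar> \<le> 1 / (3 * real n)})"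
proof (unfold disjoint_family_on_def, intro ballI impI equals0I)
  fix i j :: nat and y :: real
  assume "i \<noteq> j"
    and "y \<in> {y. \<bar>y - real i / real n\<bar> \<le> 1 / (3 * real n)} \<inter> {y. \<bar>y - real j / real n\<bar> \<le> 1 / (3 * real n)}"
  then have "\<bar>y - real i / real n\<bar> \<le> 1 / (3 * real n)" "\<bar>y - real j / real n\<bar> \<le> 1 / (3 * real n)"
    by auto
  then have "\<bar>real i / real n - real j / real n\<bar> \<le> 2 / (3 * real n)"
    by linarith
  then have "\<bar>real i - real j\<bar> \<le> 2 / 3"
    using assms by (simp add: diff_divide_distrib[symmetric] abs_divide field_simps)
  moreover have "1 \<le> \<bar>real i - real j\<bar>"
    using \<open>i \<noteq> j\<close> by linarith
  ultimately show False
    by simp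
qed

lemma sum_halt_by_prob_disjoint_le_1:
  assumes "finite I" and "disjoint_family_on A I"
  shows "(\<Sum>i\<in>I. halt_by_prob P env T (A i)) \<le> 1"
proof -
  let ?E = "\<lambda>i. {s. halted P (fst s) \<and> ram_output (snd (fst s)) \<in> A i}"
  have "(\<Sum>i\<in>I. halt_by_prob P env T (A i)) = measure_pmf.prob (run P T (init env)) (\<Union>i\<in>I. ?E i)"
    unfolding halt_by_prob_def
    using assms by (intro measure_pmf.finite_measure_finite_Union[symmetric])
      (auto simp: disjoint_family_on_def)
  then show ?thesis
    by simp
qed

section \<open>Accuracy against privacy and bounded running time\<close>

text \<open>Applied to two environments of the same dataset, \<open>\<epsilon>\<close>-DP says that accuracy in one
  environment forces accuracy, up to the factor \<open>e\<^sup>-\<^sup>\<epsilon>\<close>, in every other one.\<close>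

lemma halt_by_prob_near_mean:
  assumes dp: "eps_DP \<epsilon> P" and terminates: "terminates P env" "terminates P env'"
    and compatible: "compatible x env" "compatible x env'"
    and accurate: "out_prob P env' {y. \<bar>y - mean x\<bar> > \<alpha>} \<le> \<beta>"
    and halts_by_T: "1 - \<delta> \<le> halt_by_prob P env T UNIV"
  shows "exp (- \<epsilon>) * (1 - \<beta>) - \<delta> \<le> halt_by_prob P env T {y. \<bar>y - mean x\<bar> \<le> \<alpha>}"
proof -
  let ?near = "{y. \<bar>y - mean x\<bar> \<le> \<alpha>}"
  have "- ?near = {y. \<bar>y - mean x\<bar> > \<alpha>}"
    by auto
  then have "1 - \<beta> \<le> out_prob P env' ?near"
    using out_prob_add_compl[OF terminates(2), of ?near] accurate by simp
  also have "\<dots> \<le> exp \<epsilon> * out_prob P env ?near"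
    using dp compatible unfolding eps_DP_def neighbors_def by blast
  finally have "exp (- \<epsilon>) * (1 - \<beta>) \<le> out_prob P env ?near"
    by (simp add: exp_minus field_simps)
  then show ?thesis
    using out_prob_le_halt_by_prob[OF terminates(1), of ?near T] halts_by_T by linarith
qed

lemma halt_by_prob_zero_env_near:
  assumes halts: "\<forall>x env. compatible x env \<longrightarrow> terminates P env"
    and dp: "eps_DP \<epsilon> P"
    and halts_by_T: "\<forall>x env. compatible x env \<longrightarrow> 1 - \<delta> \<le> halt_by_prob P env T UNIV"
    and accurate: "compatible (cells_dataset n V) env'"
      "out_prob P env' {y. \<bar>y - mean (cells_dataset n V)\<bar> > \<alpha>} \<le> \<beta>"
    and "V \<subseteq> U" and U: "U \<subseteq> {3..<n + 3} - direct_addrs P"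
  shows "exp (- \<epsilon>) * (1 - \<beta>) - \<delta> - reads_prob P (cells_env n {}) T U
           \<le> halt_by_prob P (cells_env n {}) T {y. \<bar>y - real (card V) / real n\<bar> \<le> \<alpha>}"
proof -
  let ?near = "{y. \<bar>y - real (card V) / real n\<bar> \<le> \<alpha>}"
  have V: "V \<subseteq> {3..<n + 3}"
    using \<open>V \<subseteq> U\<close> U by blast
  note compatible = compatible_cells_env[OF V]
  have "exp (- \<epsilon>) * (1 - \<beta>) - \<delta> \<le> halt_by_prob P (cells_env n V) T
      {y. \<bar>y - mean (cells_dataset n V)\<bar> \<le> \<alpha>}"
    by (rule halt_by_prob_near_mean[OF dp halts[rule_format, OF compatible]
          halts[rule_format, OF accurate(1)] compatible accurate halts_by_T[rule_format, OF compatible]])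
  also have "\<dots> = halt_by_prob P (cells_env n V) T ?near"
    by (simp add: mean_cells_dataset[OF V])
  also have "\<dots> \<le> halt_by_prob P (cells_env n {}) T ?near + reads_prob P (cells_env n {}) T U"
    using \<open>V \<subseteq> U\<close> U by (intro halt_by_prob_perturb) (auto simp: cells_env_def)
  finally show ?thesis
    by simp
qed

lemma exists_inaccurate_dataset:
  assumes halts: "\<forall>x env. compatible x env \<longrightarrow> terminates P env"
    and dp: "eps_DP \<epsilon> P" and "\<beta> < 1"
    and halts_by_T: "\<forall>x env. compatible x env \<longrightarrow>
                       1 - exp (- \<epsilon>) * (1 - \<beta>) / 4 \<le> halt_by_prob P env T UNIV"
  shows "\<exists>x \<alpha>. \<alpha> > 0 \<and> (\<forall>env. compatible x env \<longrightarrow>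
           out_prob P env {y. \<bar>y - mean x\<bar> > \<alpha>} > \<beta>)"
proof (rule ccontr)
  assume contra: "\<not> ?thesis"
  have accurate: "\<exists>env'. compatible x env' \<and> out_prob P env' {y. \<bar>y - mean x\<bar> > \<alpha>} \<le> \<beta>"
    if "\<alpha> > 0" for x \<alpha>
  proof -
    have "\<not> (\<forall>env. compatible x env \<longrightarrow> out_prob P env {y. \<bar>y - mean x\<bar> > \<alpha>} > \<beta>)"
      using contra that by blast
    then show ?thesis
      by (auto simp: not_less)
  qed
  define \<gamma> where "\<gamma> = exp (- \<epsilon>) * (1 - \<beta>)"
  have "0 < \<gamma>"
    using \<open>\<beta> < 1\<close> by (simp add: \<gamma>_def)
  define k where "k = nat \<lceil>2 / \<gamma>\<rceil>"
  have "2 / \<gamma> \<le> real k" and "0 < k"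
    using \<open>0 < \<gamma>\<close> by (auto simp: k_def)
  define n where "n = card (direct_addrs P) + nat \<lceil>real T * real k / (\<gamma> / 4)\<rceil> + k"
  have "0 < n"
    using \<open>0 < k\<close> by (simp add: n_def)
  define C where "C = {3..<n + 3} - direct_addrs P"
  have "n - card (direct_addrs P) \<le> card C"
    using diff_card_le_card_Diff[OF finite_direct_addrs, of "{3..<n + 3}" P] by (simp add: C_def)
  then have "real T * real k / (\<gamma> / 4) + real k \<le> real (card C)"
    unfolding n_def by linarith
  then obtain U where U: "U \<subseteq> C" "card U = k" "reads_prob P (cells_env n {}) T U \<le> \<gamma> / 4"
    using exists_rarely_read_cells[of C "\<gamma> / 4" k T P "cells_env n {}"] \<open>0 < \<gamma>\<close> \<open>0 < k\<close>
    by (auto simp: C_def)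
  define near where "near j = {y. \<bar>y - real j / real n\<bar> \<le> 1 / (3 * real n)}" for j :: nat
  have "\<gamma> / 2 \<le> halt_by_prob P (cells_env n {}) T (near j)" if "j \<le> k" for j
  proof -
    obtain V where "V \<subseteq> U" "card V = j"
      using obtain_subset_with_card_n[of j U] \<open>j \<le> k\<close> U(2) by metis
    moreover obtain env' where env': "compatible (cells_dataset n V) env'"
      "out_prob P env' {y. \<bar>y - mean (cells_dataset n V)\<bar> > 1 / (3 * real n)} \<le> \<beta>"
      using accurate[of "1 / (3 * real n)"] \<open>0 < n\<close> by auto
    ultimately have "\<gamma> - \<gamma> / 4 - reads_prob P (cells_env n {}) T U
        \<le> halt_by_prob P (cells_env n {}) T (near j)"
      using U(1) unfolding \<gamma>_def near_def C_def
      by (metis halt_by_prob_zero_env_near[OF halts dp halts_by_T])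
    then show ?thesis
      using U(3) by linarith
  qed
  then have "(\<Sum>j\<le>k. \<gamma> / 2) \<le> (\<Sum>j\<le>k. halt_by_prob P (cells_env n {}) T (near j))"
    by (intro sum_mono) simp
  also have "\<dots> \<le> 1"
    using disjoint_family_near_multiples[OF \<open>0 < n\<close>]
    by (intro sum_halt_by_prob_disjoint_le_1) (auto simp: near_def disjoint_family_on_def)
  finally have "real (k + 1) * (\<gamma> / 2) \<le> 1"
    by simp
  then show False
    using \<open>2 / \<gamma> \<le> real k\<close> \<open>0 < \<gamma>\<close> by (simp add: field_simps)
qed

theorem mainTheorem11:
  fixes P :: prog and \<epsilon> \<beta> :: real
  assumes halts: "\<forall>x env. compatible x env \<longrightarrow> terminates P env"
    and dp: "eps_DP \<epsilon> P"
    and const_time: "\<forall>x x' env env'. compatible x env \<longrightarrow> compatible x' env' \<longrightarrow>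
                       (\<forall>t. time_prob P env t = time_prob P env' t)"
    and "0 < \<beta>" and "\<beta> < 1"
  shows "\<exists>x \<alpha>. \<alpha> > 0 \<and> (\<forall>env. compatible x env \<longrightarrow>
           out_prob P env {y. \<bar>y - mean x\<bar> > \<alpha>} > \<beta>)"
proof -
  have empty: "compatible [] (\<lambda>_. 0)"
    by (simp add: compatible_def)
  moreover have "0 < exp (- \<epsilon>) * (1 - \<beta>) / 4"
    using \<open>\<beta> < 1\<close> by simp
  ultimately obtain T where "1 - exp (- \<epsilon>) * (1 - \<beta>) / 4 \<le> halt_by_prob P (\<lambda>_. 0) T UNIV"
    using halts terminates_halt_by_prob by blast
  moreover have "halt_by_prob P env T UNIV = halt_by_prob P (\<lambda>_. 0) T UNIV" if "compatible x env" for x env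
    unfolding halt_by_prob_UNIV using const_time[rule_format, OF that empty] by simp
  ultimately have "\<forall>x env. compatible x env \<longrightarrow>
      1 - exp (- \<epsilon>) * (1 - \<beta>) / 4 \<le> halt_by_prob P env T UNIV"
    by simp
  then show ?thesis
    by (rule exists_inaccurate_dataset[OF halts dp \<open>\<beta> < 1\<close>])
qed

end
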